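(* For every $\alpha>0$ there exist a constant $c_0>0$ and infinitely many positive integers $n$ such that for each of them there is a real polynomial $P_n$ of degree $n$ satisfying: (1) $|P_n(x)|\le 1$ for $|x|\le1$, and $P_n(1)=P_n(-1)=1$; (2) $|P_n(x)|\le n^{-6}$ for $|x|\le 1-n^{-(2-\alpha)}$; (3) $P_n(x)\ge c_0$ for $1-n^{-2}\le|x|\le1$. *)

theory Defs
  imports "HOL-Computational_Algebra.Polynomial"
begin

end

theory Submission
  imports Defs "HOL-Library.Infinite_Set" "HOL-Real_Asymp.Real_Asymp"
begin

text \<open>
  Take \<open>P x = T\<^sub>n (a x) / T\<^sub>n a\<close> with \<open>T\<^sub>n\<close> the Chebyshev polynomial of even degree \<open>n\<close> and
  \<open>a = cosh t\<close> slightly above 1, so that \<open>T\<^sub>n a = cosh (n t)\<close>. Where \<open>a \<bar>x\<bar> \<le> 1\<close>, which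
  includes \<open>\<bar>x\<bar> \<le> 1 - t\<^sup>2\<close>, we get \<open>\<bar>P x\<bar> \<le> 1 / cosh (n t) \<le> 2 exp (-n t)\<close>. Near \<open>\<plusminus>1\<close>
  write \<open>a \<bar>x\<bar> = cosh s\<close>; then \<open>P x = cosh (n s) / cosh (n t) \<ge> exp (-n (t - s)) / 2\<close>, and
  \<open>t (t - s) \<le> t\<^sup>2 - s\<^sup>2 \<le> 2 (cosh t - cosh s) \<le> 2 a / n\<^sup>2\<close> keeps \<open>n (t - s)\<close> bounded once
  \<open>n t \<ge> 2\<close>. With \<open>t = n powr (\<beta> / 2 - 1)\<close> and \<open>\<beta> = min \<alpha> 2\<close>, \<open>n t = n powr (\<beta> / 2)\<close> grows
  like a power of \<open>n\<close> while \<open>t\<^sup>2 = n powr (\<beta> - 2) \<le> n powr (\<alpha> - 2)\<close>.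
\<close>

fun cheb_poly :: "nat \<Rightarrow> real poly" where
  "cheb_poly 0 = 1"
| "cheb_poly (Suc 0) = [:0, 1:]"
| "cheb_poly (Suc (Suc n)) = smult 2 (pCons 0 (cheb_poly (Suc n))) - cheb_poly n"

lemma cheb_poly_cos: "poly (cheb_poly n) (cos t) = cos (real n * t)"
proof (induction n rule: cheb_poly.induct)
  case (3 n)
  have "cos (real (Suc (Suc n)) * t) + cos (real n * t) = 2 * cos t * cos (real (Suc n) * t)"
    using cos_add[of "real (Suc n) * t" t] cos_diff[of "real (Suc n) * t" t]
    by (simp add: algebra_simps)
  with 3 show ?case
    by (simp add: algebra_simps)
qed simp_all

lemma cheb_poly_cosh: "poly (cheb_poly n) (cosh t) = cosh (real n * t)"
proof (induction n rule: cheb_poly.induct)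
  case (3 n)
  have "cosh (real (Suc (Suc n)) * t) + cosh (real n * t) = 2 * cosh t * cosh (real (Suc n) * t)"
    using cosh_add[of "real (Suc n) * t" t] cosh_diff[of "real (Suc n) * t" t]
    by (simp add: algebra_simps)
  with 3 show ?case
    by (simp add: algebra_simps)
qed simp_all

lemma cheb_poly_minus: "poly (cheb_poly n) (- y) = (-1) ^ n * poly (cheb_poly n) y"
  by (induction n rule: cheb_poly.induct) (auto simp: algebra_simps)

lemma degree_cheb_poly: "degree (cheb_poly n) = n"
proof (induction n rule: cheb_poly.induct)
  case (3 n)
  then have "cheb_poly (Suc n) \<noteq> 0"
    by auto
  with 3 have "degree (smult 2 (pCons 0 (cheb_poly (Suc n)))) = Suc (Suc n)"
    by simp
  with 3 show ?case
    using degree_add_eq_left[of "- cheb_poly n" "smult 2 (pCons 0 (cheb_poly (Suc n)))"]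
    by simp
qed simp_all

lemma abs_cheb_poly_le_1: "\<bar>y\<bar> \<le> 1 \<Longrightarrow> \<bar>poly (cheb_poly n) y\<bar> \<le> 1"
  by (metis abs_cos_le_one cheb_poly_cos cos_arccos_abs)

lemma cheb_poly_arcosh: "1 \<le> y \<Longrightarrow> poly (cheb_poly n) y = cosh (real n * arcosh y)"
  using cheb_poly_cosh[of n "arcosh y"] by simp

lemma abs_cheb_poly_le_cosh:
  assumes "0 \<le> t" "\<bar>y\<bar> \<le> cosh t"
  shows "\<bar>poly (cheb_poly n) y\<bar> \<le> cosh (real n * t)"
proof (cases "\<bar>y\<bar> \<le> 1")
  case True
  then show ?thesis
    using abs_cheb_poly_le_1 cosh_real_ge_1 order_trans by blast
next
  case False
  have "arcosh \<bar>y\<bar> \<le> t"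
    using False assms arcosh_less_iff_real[of "cosh t" "\<bar>y\<bar>"] cosh_real_ge_1[of t]
    by (simp add: arcosh_cosh_real not_less)
  then have "cosh (real n * arcosh \<bar>y\<bar>) \<le> cosh (real n * t)"
    using False assms by (subst cosh_real_nonneg_le_iff) (auto intro: mult_left_mono)
  moreover have "\<bar>poly (cheb_poly n) y\<bar> = \<bar>poly (cheb_poly n) \<bar>y\<bar>\<bar>"
    by (cases "0 \<le> y") (simp_all add: cheb_poly_minus abs_mult)
  moreover have "\<dots> = cosh (real n * arcosh \<bar>y\<bar>)"
    using False by (simp add: cheb_poly_arcosh)
  ultimately show ?thesis
    by simp
qed

lemma sinh_ge_self: "0 \<le> x \<Longrightarrow> x \<le> sinh (x :: real)"
  using real_le_x_sinh[of x] by (simp add: sinh_field_def exp_minus)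

lemma cosh_diff_cosh:
  fixes x y :: "'a :: {banach, real_normed_field}"
  shows "cosh x - cosh y = 2 * sinh ((x + y) / 2) * sinh ((x - y) / 2)"
proof -
  have "cosh x - cosh y = cosh ((x + y) / 2 + (x - y) / 2) - cosh ((x + y) / 2 - (x - y) / 2)"
    by (simp add: field_simps)
  also have "\<dots> = 2 * sinh ((x + y) / 2) * sinh ((x - y) / 2)"
    unfolding cosh_add cosh_diff by simp
  finally show ?thesis .
qed

lemma cosh_diff_ge:
  fixes x y :: real
  assumes "0 \<le> y" "y \<le> x"
  shows "(x\<^sup>2 - y\<^sup>2) / 2 \<le> cosh x - cosh y"
proof -
  have "(x\<^sup>2 - y\<^sup>2) / 2 = 2 * ((x + y) / 2) * ((x - y) / 2)"
    by (simp add: power2_eq_square field_simps)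
  also have "\<dots> \<le> 2 * sinh ((x + y) / 2) * sinh ((x - y) / 2)"
    using assms by (intro mult_mono mult_left_mono sinh_ge_self) auto
  finally show ?thesis
    by (simp add: cosh_diff_cosh)
qed

lemma cosh_ge_1_plus_half_square: "1 + x\<^sup>2 / 2 \<le> cosh (x :: real)"
  using cosh_diff_ge[of 0 "\<bar>x\<bar>"] by simp

lemma cosh_le_1_plus_square:
  fixes x :: real
  assumes "\<bar>x\<bar> \<le> 1"
  shows "cosh x \<le> 1 + x\<^sup>2"
proof -
  define a where "a = \<bar>x\<bar>"
  have a: "0 \<le> a" "a \<le> 1"
    using assms by (auto simp: a_def)
  have "exp (- a) \<le> 1 / (1 + a)"
    using a exp_ge_add_one_self[of a] by (simp add: exp_minus field_simps)
  also have "\<dots> \<le> 1 - a + a\<^sup>2"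
    using a by (simp add: field_simps power2_eq_square)
  finally have "exp a + exp (- a) \<le> (1 + a + a\<^sup>2) + (1 - a + a\<^sup>2)"
    using exp_bound[OF a] by linarith
  then have "cosh a \<le> 1 + a\<^sup>2"
    by (simp add: cosh_field_def)
  then show ?thesis
    by (simp add: a_def)
qed

lemma exp_div_2_le_cosh: "exp x / 2 \<le> cosh (x :: real)"
  by (simp add: cosh_field_def)

lemma cosh_le_exp: "0 \<le> x \<Longrightarrow> cosh x \<le> exp (x :: real)"
  using exp_le_cancel_iff[of "- x" x] by (simp add: cosh_field_def)

lemma exp_diff_div_2_le_cosh_div_cosh:
  fixes x y :: real
  assumes "0 \<le> y"
  shows "exp (x - y) / 2 \<le> cosh x / cosh y"
proof -
  have "exp (x - y) / 2 = (exp x / 2) / exp y"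
    by (simp add: exp_diff)
  also have "\<dots> \<le> cosh x / exp y"
    by (intro divide_right_mono exp_div_2_le_cosh) simp
  also have "\<dots> \<le> cosh x / cosh y"
    using assms by (intro divide_left_mono cosh_le_exp) auto
  finally show ?thesis .
qed

definition scaled_cheb :: "nat \<Rightarrow> real \<Rightarrow> real poly" where
  "scaled_cheb n t = smult (1 / cosh (real n * t)) (cheb_poly n \<circ>\<^sub>p [:0, cosh t:])"

lemma poly_scaled_cheb:
  "poly (scaled_cheb n t) x = poly (cheb_poly n) (cosh t * x) / cosh (real n * t)"
  by (simp add: scaled_cheb_def poly_pcompose mult.commute)

lemma degree_scaled_cheb: "degree (scaled_cheb n t) = n"
  by (simp add: scaled_cheb_def degree_pcompose degree_cheb_poly)

lemma scaled_cheb_at_1: "poly (scaled_cheb n t) 1 = 1"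
  by (simp add: poly_scaled_cheb cheb_poly_cosh)

lemma scaled_cheb_minus:
  "even n \<Longrightarrow> poly (scaled_cheb n t) (- x) = poly (scaled_cheb n t) x"
  using cheb_poly_minus[of n "cosh t * x"] by (simp add: poly_scaled_cheb)

lemma abs_scaled_cheb_le_1:
  assumes "0 \<le> t" "\<bar>x\<bar> \<le> 1"
  shows "\<bar>poly (scaled_cheb n t) x\<bar> \<le> 1"
proof -
  have "\<bar>cosh t * x\<bar> \<le> cosh t"
    using assms by (simp add: abs_mult mult_left_le)
  then have "\<bar>poly (cheb_poly n) (cosh t * x)\<bar> \<le> cosh (real n * t)"
    by (rule abs_cheb_poly_le_cosh[OF assms(1)])
  then show ?thesis
    by (simp add: poly_scaled_cheb)
qed

lemma abs_scaled_cheb_le_exp: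
  assumes "cosh t * \<bar>x\<bar> \<le> 1"
  shows "\<bar>poly (scaled_cheb n t) x\<bar> \<le> 2 * exp (- (real n * t))"
proof -
  have "\<bar>poly (cheb_poly n) (cosh t * x)\<bar> \<le> 1"
    using assms by (intro abs_cheb_poly_le_1) (simp add: abs_mult)
  then have "\<bar>poly (scaled_cheb n t) x\<bar> \<le> 1 / cosh (real n * t)"
    by (simp add: poly_scaled_cheb divide_right_mono)
  also have "\<dots> \<le> 1 / (exp (real n * t) / 2)"
    by (intro divide_left_mono exp_div_2_le_cosh) auto
  finally show ?thesis
    by (simp add: exp_minus field_simps)
qed

lemma scaled_cheb_ge_exp:
  assumes "0 < t" "x \<le> 1" "1 \<le> cosh t * x"
  shows "exp (- (2 * real n * cosh t * (1 - x) / t)) / 2 \<le> poly (scaled_cheb n t) x"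
proof -
  define s where "s = arcosh (cosh t * x)"
  have cosh_s: "cosh s = cosh t * x"
    using assms by (simp add: s_def)
  have "0 \<le> s"
    using assms by (simp add: s_def)
  moreover have "s \<le> t"
    using assms cosh_s \<open>0 \<le> s\<close> by (subst cosh_real_nonneg_le_iff[symmetric]) (auto simp: mult_left_le)
  ultimately have "t * (t - s) \<le> t\<^sup>2 - s\<^sup>2"
    using mult_nonneg_nonneg[of s "t - s"] by (simp add: power2_eq_square algebra_simps)
  also have "\<dots> \<le> 2 * (cosh t - cosh s)"
    using cosh_diff_ge[OF \<open>0 \<le> s\<close> \<open>s \<le> t\<close>] by simp
  also have "\<dots> = 2 * cosh t * (1 - x)"
    by (simp add: cosh_s algebra_simps)
  finally have "t - s \<le> 2 * cosh t * (1 - x) / t"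
    using assms(1) by (simp add: field_simps)
  from mult_left_mono[OF this, of "real n"]
  have "real n * (t - s) \<le> 2 * real n * cosh t * (1 - x) / t"
    by (simp add: algebra_simps)
  then have "exp (- (2 * real n * cosh t * (1 - x) / t)) / 2 \<le> exp (real n * s - real n * t) / 2"
    by (simp add: algebra_simps)
  also have "\<dots> \<le> cosh (real n * s) / cosh (real n * t)"
    using assms(1) by (intro exp_diff_div_2_le_cosh_div_cosh) simp
  also have "\<dots> = poly (scaled_cheb n t) x"
    using assms by (simp add: poly_scaled_cheb cheb_poly_arcosh s_def)
  finally show ?thesis .
qed

lemma abs_scaled_cheb_le_exp_interior:
  assumes "\<bar>x\<bar> \<le> 1 - t\<^sup>2"
  shows "\<bar>poly (scaled_cheb n t) x\<bar> \<le> 2 * exp (- (real n * t))"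
proof -
  have "\<bar>t\<bar> \<le> 1"
    using assms by (simp flip: abs_square_le_1)
  then have "cosh t * \<bar>x\<bar> \<le> (1 + t\<^sup>2) * (1 - t\<^sup>2)"
    using assms by (intro mult_mono cosh_le_1_plus_square) auto
  also have "\<dots> \<le> 1"
    by (simp add: algebra_simps)
  finally show ?thesis
    by (rule abs_scaled_cheb_le_exp)
qed

lemma scaled_cheb_ge_near_endpoints:
  assumes "even n" "0 < t" "t \<le> 1" "2 \<le> real n * t"
    and "1 - 1 / (real n)\<^sup>2 \<le> \<bar>x\<bar>" "\<bar>x\<bar> \<le> 1"
  shows "exp (-2) / 2 \<le> poly (scaled_cheb n t) x"
proof -
  have "0 < real n"
    using assms(2,4) by (cases n) auto
  then have "1 / (real n)\<^sup>2 \<le> 1"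
    by (simp add: divide_le_eq_1 one_le_power)
  have "2\<^sup>2 \<le> (real n * t)\<^sup>2"
    using assms(4) by (intro power_mono) auto
  then have "1 \<le> (1 + t\<^sup>2 / 2) * (1 - 1 / (real n)\<^sup>2)"
    using \<open>0 < real n\<close> assms(3) power_le_one[of t 2] assms(2)
    by (simp add: field_simps power_mult_distrib)
  also have "\<dots> \<le> cosh t * \<bar>x\<bar>"
    using assms \<open>1 / (real n)\<^sup>2 \<le> 1\<close> by (intro mult_mono cosh_ge_1_plus_half_square) auto
  finally have "1 \<le> cosh t * \<bar>x\<bar>" .
  have "2 * real n * cosh t * (1 - \<bar>x\<bar>) / t \<le> 2 * real n * 2 * (1 / (real n)\<^sup>2) / t"
    using assms cosh_le_1_plus_square[of t] power_le_one[of t 2]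
    by (intro divide_right_mono mult_mono) auto
  also have "\<dots> = 4 / (real n * t)"
    using \<open>0 < real n\<close> by (simp add: power2_eq_square)
  also have "\<dots> \<le> 2"
    using assms(4) by (simp add: field_simps)
  finally have "exp (-2) / 2 \<le> exp (- (2 * real n * cosh t * (1 - \<bar>x\<bar>) / t)) / 2"
    by simp
  also have "\<dots> \<le> poly (scaled_cheb n t) \<bar>x\<bar>"
    using assms(2,6) \<open>1 \<le> cosh t * \<bar>x\<bar>\<close> by (rule scaled_cheb_ge_exp)
  also have "\<dots> = poly (scaled_cheb n t) x"
    using scaled_cheb_minus[OF assms(1)] by (cases "0 \<le> x") auto
  finally show ?thesis .
qed

lemma scaled_cheb_witness:
  fixes \<alpha> \<beta> :: real
  assumes "even n" "0 < \<beta>" "\<beta> \<le> 2" "\<beta> \<le> \<alpha>"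
    and "2 \<le> real n powr (\<beta> / 2)" "2 * exp (- (real n powr (\<beta> / 2))) \<le> real n powr (-6)"
  shows "n > 0 \<and> (\<exists>P :: real poly. degree P = n \<and>
       (\<forall>x. \<bar>x\<bar> \<le> 1 \<longrightarrow> \<bar>poly P x\<bar> \<le> 1) \<and> poly P 1 = 1 \<and> poly P (-1) = 1 \<and>
       (\<forall>x. \<bar>x\<bar> \<le> 1 - real n powr (-(2 - \<alpha>)) \<longrightarrow> \<bar>poly P x\<bar> \<le> real n powr (-6)) \<and>
       (\<forall>x. 1 - real n powr (-2) \<le> \<bar>x\<bar> \<and> \<bar>x\<bar> \<le> 1 \<longrightarrow> poly P x \<ge> exp (-2) / 2))"
proof -
  define t where "t = real n powr (\<beta> / 2 - 1)"
  define P where "P = scaled_cheb n t"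
  have "0 < n"
    using assms(5) by (cases n) auto
  have nt: "real n * t = real n powr (\<beta> / 2)"
    by (simp add: t_def powr_mult_base)
  have t_square: "t\<^sup>2 = real n powr (\<beta> - 2)"
    by (simp add: t_def power2_eq_square flip: powr_add)
  have t: "0 < t" "t \<le> 1"
    using \<open>0 < n\<close> assms(3) powr_mono[of "\<beta> / 2 - 1" 0 "real n"] by (auto simp: t_def)
  have interior_bound: "t\<^sup>2 \<le> real n powr (-(2 - \<alpha>))"
    using \<open>0 < n\<close> assms(4) by (simp add: t_square powr_mono)
  show ?thesis
  proof (intro conjI exI[of _ P] allI impI)
    show "0 < n" "degree P = n" "poly P 1 = 1"
      using \<open>0 < n\<close> by (simp_all add: P_def degree_scaled_cheb scaled_cheb_at_1)
    show "poly P (-1) = 1"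
      using scaled_cheb_minus[OF assms(1), of t 1] by (simp add: P_def scaled_cheb_at_1)
    show "\<bar>poly P x\<bar> \<le> 1" if "\<bar>x\<bar> \<le> 1" for x
      using abs_scaled_cheb_le_1[of t x n] t that by (simp add: P_def)
    show "\<bar>poly P x\<bar> \<le> real n powr (-6)" if "\<bar>x\<bar> \<le> 1 - real n powr (-(2 - \<alpha>))" for x
      using abs_scaled_cheb_le_exp_interior[of x t n] that interior_bound assms(6) nt
      by (simp add: P_def)
    show "exp (-2) / 2 \<le> poly P x" if "1 - real n powr (-2) \<le> \<bar>x\<bar> \<and> \<bar>x\<bar> \<le> 1" for x
      using scaled_cheb_ge_near_endpoints[OF assms(1) t, of x] that assms(5) nt \<open>0 < n\<close>
      by (simp add: P_def powr_neg_numeral)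
  qed
qed

lemma infinite_scaled_cheb_witnesses:
  fixes \<alpha> \<beta> :: real
  assumes "0 < \<beta>" "\<beta> \<le> 2" "\<beta> \<le> \<alpha>"
    and "eventually (\<lambda>n. 2 \<le> real n powr (\<beta> / 2) \<and>
                       2 * exp (- (real n powr (\<beta> / 2))) \<le> real n powr (-6)) sequentially"
  shows "infinite {n. n > 0 \<and> (\<exists>P :: real poly. degree P = n \<and>
       (\<forall>x. \<bar>x\<bar> \<le> 1 \<longrightarrow> \<bar>poly P x\<bar> \<le> 1) \<and> poly P 1 = 1 \<and> poly P (-1) = 1 \<and>
       (\<forall>x. \<bar>x\<bar> \<le> 1 - real n powr (-(2 - \<alpha>)) \<longrightarrow> \<bar>poly P x\<bar> \<le> real n powr (-6)) \<and>
       (\<forall>x. 1 - real n powr (-2) \<le> \<bar>x\<bar> \<and> \<bar>x\<bar> \<le> 1 \<longrightarrow> poly P x \<ge> exp (-2) / 2))}"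
    (is "infinite {n. ?good n}")
proof -
  obtain N where N: "\<And>n. N \<le> n \<Longrightarrow>
      2 \<le> real n powr (\<beta> / 2) \<and> 2 * exp (- (real n powr (\<beta> / 2))) \<le> real n powr (-6)"
    using assms(4) unfolding eventually_sequentially by blast
  show ?thesis
    unfolding infinite_nat_iff_unbounded_le mem_Collect_eq
  proof
    fix m :: nat
    have good: "?good (2 * (m + N))"
      using N[of "2 * (m + N)"] by (intro scaled_cheb_witness[of _ \<beta> \<alpha>] assms(1-3)) simp_all
    show "\<exists>n\<ge>m. ?good n"
      by (intro exI[of _ "2 * (m + N)"] conjI[OF _ good]) simp
  qed
qed

theorem lemma4p2:
  fixes \<alpha> :: real
  assumes "\<alpha> > 0"
  shows "\<exists>c0::real. c0 > 0 \<and>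
    infinite {n::nat. n > 0 \<and> (\<exists>P :: real poly. degree P = n \<and>
       (\<forall>x. \<bar>x\<bar> \<le> 1 \<longrightarrow> \<bar>poly P x\<bar> \<le> 1) \<and> poly P 1 = 1 \<and> poly P (-1) = 1 \<and>
       (\<forall>x. \<bar>x\<bar> \<le> 1 - real n powr (-(2 - \<alpha>)) \<longrightarrow> \<bar>poly P x\<bar> \<le> real n powr (-6)) \<and>
       (\<forall>x. 1 - real n powr (-2) \<le> \<bar>x\<bar> \<and> \<bar>x\<bar> \<le> 1 \<longrightarrow> poly P x \<ge> c0))}"
proof -
  define \<beta> where "\<beta> = min \<alpha> 2"
  have \<beta>: "0 < \<beta>" "\<beta> \<le> 2" "\<beta> \<le> \<alpha>"
    using assms by (auto simp: \<beta>_def)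
  have "eventually (\<lambda>n. 2 \<le> real n powr (\<beta> / 2)) sequentially"
    using \<beta> by real_asymp
  moreover have "eventually (\<lambda>n. 2 * exp (- (real n powr (\<beta> / 2))) \<le> real n powr (-6)) sequentially"
    using \<beta> by real_asymp
  ultimately show ?thesis
    using infinite_scaled_cheb_witnesses[OF \<beta> eventually_conj]
    by (intro exI[of _ "exp (-2) / 2"] conjI) simp_all
qed

end
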